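(* Let $A$ be a non-empty set and $\phi\in\ell_1(A)$, regarded as the functional $\phi(x^* )=\sum_{a\in A}\phi(a)x^*(a)$ on $\ell_\infty(A)$. Then the function $g_\phi:\ell_\infty(A)\to\mathbb R_+$, $g_\phi(x^* )=|\phi(|x^*|)|$, belongs to $FBL[\ell_1(A)]$.
   Context: For a real Banach space $E$ with dual $E^*$ and closed unit ball $B_E$, let $H[E]$ be the vector space of all positively homogeneous functions $f:E^*\to\mathbb R$ ($f(\lambda x^* )=\lambda f(x^* )$ for $\lambda>0$). For $f\in H[E]$ put $\|f\|_{FBL[E]}:=\sup\{\sum_{k=1}^n|f(x_k^* )| : n\in\mathbb N,\ x_1^*,\dots,x_n^*\in E^*,\ \sup_{x\in B_E}\sum_{k=1}^n|x_k^*(x)|\le 1\}$. $H_0[E]:=\{f\in H[E]:\|f\|_{FBL[E]}<\infty\}$ is a Banach lattice with this norm and pointwise order/operations. For $x\in E$ let $\delta_x(x^* )=x^*(x)$. $FBL[E]$ is the closed sublattice of $H_0[E]$ generated by $\{\delta_x:x\in E\}$. Here $E=\ell_1(A)$ with $E^*$ identified with $\ell_\infty(A)$. *)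

theory Defs
  imports "HOL-Analysis.Analysis"
begin

text \<open>E = l_1(A) with A the (nonempty) universe of type 'a; E* = l_infinity(A).\<close>

definition l1 :: "('a \<Rightarrow> real) set" where
  "l1 = {x. (\<lambda>a. \<bar>x a\<bar>) summable_on UNIV}"

definition linf :: "('a \<Rightarrow> real) set" where
  "linf = {y. bounded (range y)}"

definition pair :: "('a \<Rightarrow> real) \<Rightarrow> ('a \<Rightarrow> real) \<Rightarrow> real" where
  "pair y x = (\<Sum>\<^sub>\<infinity>a. y a * x a)"

definition l1_ball :: "('a \<Rightarrow> real) set" where
  "l1_ball = {x \<in> l1. (\<Sum>\<^sub>\<infinity>a. \<bar>x a\<bar>) \<le> 1}"

definition fbl_admissible :: "('a \<Rightarrow> real) list \<Rightarrow> bool" where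
  "fbl_admissible ys \<longleftrightarrow> set ys \<subseteq> linf \<and>
     (\<forall>x\<in>l1_ball. (\<Sum>y\<leftarrow>ys. \<bar>pair y x\<bar>) \<le> 1)"

definition fbl_vals :: "(('a \<Rightarrow> real) \<Rightarrow> real) \<Rightarrow> real set" where
  "fbl_vals f = {(\<Sum>y\<leftarrow>ys. \<bar>f y\<bar>) | ys. fbl_admissible ys}"

definition fbl_norm :: "(('a \<Rightarrow> real) \<Rightarrow> real) \<Rightarrow> real" where
  "fbl_norm f = Sup (fbl_vals f)"

text \<open>Positively homogeneous on E* = l_infinity(A) (values outside linf are irrelevant).\<close>
definition pos_hom :: "(('a \<Rightarrow> real) \<Rightarrow> real) \<Rightarrow> bool" where
  "pos_hom f \<longleftrightarrow> (\<forall>y\<in>linf. \<forall>c::real. c > 0 \<longrightarrow> f (\<lambda>a. c * y a) = c * f y)"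

definition H0 :: "(('a \<Rightarrow> real) \<Rightarrow> real) set" where
  "H0 = {f. pos_hom f \<and> bdd_above (fbl_vals f)}"

definition delta :: "('a \<Rightarrow> real) \<Rightarrow> ('a \<Rightarrow> real) \<Rightarrow> real" where
  "delta x = (\<lambda>y. pair y x)"

inductive_set gen_sublattice :: "(('a \<Rightarrow> real) \<Rightarrow> real) set" where
  gen_delta: "x \<in> l1 \<Longrightarrow> delta x \<in> gen_sublattice"
| gen_add: "f \<in> gen_sublattice \<Longrightarrow> g \<in> gen_sublattice \<Longrightarrow> (\<lambda>y. f y + g y) \<in> gen_sublattice"
| gen_scale: "f \<in> gen_sublattice \<Longrightarrow> (\<lambda>y. c * f y) \<in> gen_sublattice"
| gen_max: "f \<in> gen_sublattice \<Longrightarrow> g \<in> gen_sublattice \<Longrightarrow> (\<lambda>y. max (f y) (g y)) \<in> gen_sublattice"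
| gen_min: "f \<in> gen_sublattice \<Longrightarrow> g \<in> gen_sublattice \<Longrightarrow> (\<lambda>y. min (f y) (g y)) \<in> gen_sublattice"

text \<open>FBL[l_1(A)]: the closure in H0 (w.r.t. the FBL norm) of the generated sublattice,
  which is the closed sublattice generated by the deltas.\<close>
definition FBL :: "(('a \<Rightarrow> real) \<Rightarrow> real) set" where
  "FBL = {f \<in> H0. \<forall>\<epsilon>>0. \<exists>g\<in>gen_sublattice. fbl_norm (\<lambda>y. f y - g y) < \<epsilon>}"

end

theory Submission
  imports Defs
begin

text \<open>
  The map \<open>\<phi> \<mapsto> g\<^sub>\<phi>\<close> is 1-Lipschitz from \<open>\<ell>\<^sub>1(A)\<close> to the FBL norm. Testing an admissible
  family \<open>x\<^sub>1\<^sup>*, \<dots>, x\<^sub>n\<^sup>*\<close> on the unit vectors \<open>e\<^sub>a\<close> gives \<open>\<Sum>\<^sub>k \<bar>x\<^sub>k\<^sup>*(a)\<bar> \<le> 1\<close> for every \<open>a\<close>,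
  and \<open>\<bar>g\<^sub>\<phi>(x\<^sup>*) - g\<^sub>\<psi>(x\<^sup>*)\<bar> \<le> \<Sum>\<^sub>a \<bar>x\<^sup>*(a)\<bar> \<bar>\<phi>(a) - \<psi>(a)\<bar>\<close>; summing over \<open>k\<close> and swapping the
  sums gives \<open>\<parallel>g\<^sub>\<phi> - g\<^sub>\<psi>\<parallel> \<le> \<parallel>\<phi> - \<psi>\<parallel>\<^sub>1\<close>. If \<open>\<phi>\<close> is supported on a finite set \<open>F\<close>, then
  \<open>g\<^sub>\<phi> = \<bar>\<Sum>\<^sub>a\<^sub>\<in>\<^sub>F \<phi>(a) \<bar>\<delta>(e\<^sub>a)\<bar>\<bar>\<close> lies in the sublattice generated by the \<open>\<delta>\<^sub>x\<close>, and a general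
  \<open>\<phi>\<close> is the \<open>\<ell>\<^sub>1\<close>-limit of its finite truncations.
\<close>

lemma infsum_diff:
  fixes f g :: "'a \<Rightarrow> 'b::{topological_ab_group_add, t2_space}"
  assumes "f summable_on A" "g summable_on A"
  shows "infsum (\<lambda>x. f x - g x) A = infsum f A - infsum g A"
proof -
  have "infsum (\<lambda>x. f x + - g x) A = infsum f A + infsum (\<lambda>x. - g x) A"
    using assms by (intro infsum_add) (simp_all add: summable_on_uminus)
  then show ?thesis
    by (simp add: infsum_uminus)
qed

lemma summable_on_sum_list:
  fixes f :: "'i \<Rightarrow> 'a \<Rightarrow> 'b::topological_comm_monoid_add"
  assumes "\<And>i. i \<in> set is \<Longrightarrow> f i summable_on A"
  shows "(\<lambda>x. \<Sum>i\<leftarrow>is. f i x) summable_on A"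
  using assms by (induction "is") (auto intro: summable_on_add)

lemma infsum_sum_list:
  fixes f :: "'i \<Rightarrow> 'a \<Rightarrow> 'b::{topological_comm_monoid_add, t2_space}"
  assumes "\<And>i. i \<in> set is \<Longrightarrow> f i summable_on A"
  shows "infsum (\<lambda>x. \<Sum>i\<leftarrow>is. f i x) A = (\<Sum>i\<leftarrow>is. infsum (f i) A)"
  using assms by (induction "is") (auto simp: infsum_add summable_on_sum_list)

definition l1_norm :: "('a \<Rightarrow> real) \<Rightarrow> real" where
  "l1_norm x = (\<Sum>\<^sub>\<infinity>a. \<bar>x a\<bar>)"

lemma l1_diff:
  assumes "\<phi> \<in> l1" "\<psi> \<in> l1"
  shows "(\<lambda>a. \<phi> a - \<psi> a) \<in> l1"
  unfolding l1_def mem_Collect_eq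
proof (rule summable_on_comparison_test)
  show "(\<lambda>a. \<bar>\<phi> a\<bar> + \<bar>\<psi> a\<bar>) summable_on UNIV"
    using assms unfolding l1_def by (intro summable_on_add) auto
qed auto

lemma l1_mult_bounded_abs_summable:
  assumes "\<phi> \<in> l1" "\<And>a. \<bar>c a\<bar> \<le> M"
  shows "(\<lambda>a. \<bar>c a * \<phi> a\<bar>) summable_on UNIV"
proof (rule summable_on_comparison_test)
  show "(\<lambda>a. M * \<bar>\<phi> a\<bar>) summable_on UNIV"
    using assms(1) unfolding l1_def by (simp add: summable_on_cmult_right)
  show "\<bar>c a * \<phi> a\<bar> \<le> M * \<bar>\<phi> a\<bar>" for a
    using assms(2)[of a] by (simp add: abs_mult mult_right_mono)
qed simp

lemma l1_mult_bounded_summable: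
  assumes "\<phi> \<in> l1" "\<And>a. \<bar>c a\<bar> \<le> M"
  shows "(\<lambda>a. c a * \<phi> a) summable_on UNIV"
  by (rule abs_summable_summable) (use l1_mult_bounded_abs_summable[of \<phi> c M, OF assms] in simp)

lemma linf_boundE:
  assumes "y \<in> linf"
  obtains M where "\<And>a. \<bar>y a\<bar> \<le> M"
  using assms unfolding linf_def bounded_iff by auto

lemma pair_diff:
  assumes "\<phi> \<in> l1" "\<psi> \<in> l1" "\<And>a. \<bar>z a\<bar> \<le> M"
  shows "pair z \<phi> - pair z \<psi> = pair z (\<lambda>a. \<phi> a - \<psi> a)"
proof -
  have "pair z \<phi> - pair z \<psi> = (\<Sum>\<^sub>\<infinity>a. z a * \<phi> a - z a * \<psi> a)"
    unfolding pair_def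
    by (rule infsum_diff[symmetric]; rule l1_mult_bounded_summable[of _ z M]) (use assms in auto)
  also have "\<dots> = pair z (\<lambda>a. \<phi> a - \<psi> a)"
    unfolding pair_def by (simp only: right_diff_distrib)
  finally show ?thesis .
qed

lemma abs_pair_le:
  assumes "\<phi> \<in> l1" "\<And>a. \<bar>z a\<bar> \<le> M"
  shows "\<bar>pair z \<phi>\<bar> \<le> (\<Sum>\<^sub>\<infinity>a. \<bar>z a\<bar> * \<bar>\<phi> a\<bar>)"
proof -
  have "norm (\<Sum>\<^sub>\<infinity>a. z a * \<phi> a) \<le> (\<Sum>\<^sub>\<infinity>a. norm (z a * \<phi> a))"
    by (rule norm_infsum_bound) (use l1_mult_bounded_abs_summable[of \<phi> z M, OF assms] in simp)
  then show ?thesis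
    unfolding pair_def real_norm_def abs_mult .
qed

lemma pair_indicator_singleton: "pair y (indicator {a}) = y a"
proof -
  have "pair y (indicator {a}) = (\<Sum>\<^sub>\<infinity>b\<in>{a}. y b * indicator {a} b)"
    unfolding pair_def by (rule infsum_cong_neutral) auto
  then show ?thesis by simp
qed

lemma indicator_singleton_in_l1_ball: "(indicator {a} :: 'a \<Rightarrow> real) \<in> l1_ball"
proof -
  have "((\<lambda>b. \<bar>indicator {a} b :: real\<bar>) has_sum 1) UNIV"
    by (rule has_sum_finite_neutralI[of "{a}"]) auto
  then show ?thesis
    unfolding l1_ball_def l1_def by (simp add: has_sum_iff)
qed

lemma indicator_singleton_in_l1: "(indicator {a} :: 'a \<Rightarrow> real) \<in> l1"
  using indicator_singleton_in_l1_ball[of a] unfolding l1_ball_def by simp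

lemma fbl_admissible_column_sum_le:
  assumes "fbl_admissible ys"
  shows "(\<Sum>y\<leftarrow>ys. \<bar>y a\<bar>) \<le> 1"
proof -
  have "(\<Sum>y\<leftarrow>ys. \<bar>pair y (indicator {a})\<bar>) \<le> 1"
    using assms indicator_singleton_in_l1_ball[of a] unfolding fbl_admissible_def by blast
  then show ?thesis
    by (simp add: pair_indicator_singleton)
qed

lemma fbl_admissible_boundE:
  assumes "fbl_admissible ys" "y \<in> set ys"
  obtains M where "\<And>a. \<bar>y a\<bar> \<le> M"
proof -
  have "y \<in> linf"
    using assms unfolding fbl_admissible_def by blast
  then show ?thesis
    using that by (rule linf_boundE)
qed

lemma fbl_admissible_sum_abs_pair_le:
  assumes "fbl_admissible ys" "\<xi> \<in> l1"
  shows "(\<Sum>y\<leftarrow>ys. \<bar>pair (\<lambda>a. \<bar>y a\<bar>) \<xi>\<bar>) \<le> l1_norm \<xi>"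
proof -
  have bounds: "\<bar>pair (\<lambda>a. \<bar>y a\<bar>) \<xi>\<bar> \<le> (\<Sum>\<^sub>\<infinity>a. \<bar>y a\<bar> * \<bar>\<xi> a\<bar>)"
    and summable: "(\<lambda>a. \<bar>y a\<bar> * \<bar>\<xi> a\<bar>) summable_on UNIV" if y: "y \<in> set ys" for y
  proof -
    obtain M where M: "\<And>a. \<bar>\<bar>y a\<bar>\<bar> \<le> M"
      using fbl_admissible_boundE[OF assms(1) y] by (metis abs_abs)
    show "\<bar>pair (\<lambda>a. \<bar>y a\<bar>) \<xi>\<bar> \<le> (\<Sum>\<^sub>\<infinity>a. \<bar>y a\<bar> * \<bar>\<xi> a\<bar>)"
      using abs_pair_le[of \<xi> "\<lambda>a. \<bar>y a\<bar>" M, OF assms(2) M] by simp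
    show "(\<lambda>a. \<bar>y a\<bar> * \<bar>\<xi> a\<bar>) summable_on UNIV"
      using l1_mult_bounded_abs_summable[of \<xi> "\<lambda>a. \<bar>y a\<bar>" M, OF assms(2) M]
      by (simp add: abs_mult)
  qed
  have "(\<Sum>y\<leftarrow>ys. \<bar>pair (\<lambda>a. \<bar>y a\<bar>) \<xi>\<bar>) \<le> (\<Sum>y\<leftarrow>ys. \<Sum>\<^sub>\<infinity>a. \<bar>y a\<bar> * \<bar>\<xi> a\<bar>)"
    using bounds by (rule sum_list_mono)
  also have "\<dots> = (\<Sum>\<^sub>\<infinity>a. (\<Sum>y\<leftarrow>ys. \<bar>y a\<bar>) * \<bar>\<xi> a\<bar>)"
    using infsum_sum_list[of ys "\<lambda>y a. \<bar>y a\<bar> * \<bar>\<xi> a\<bar>", OF summable]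
    by (simp add: sum_list_mult_const)
  also have "\<dots> \<le> l1_norm \<xi>"
    unfolding l1_norm_def
  proof (rule infsum_mono)
    show "(\<lambda>a. (\<Sum>y\<leftarrow>ys. \<bar>y a\<bar>) * \<bar>\<xi> a\<bar>) summable_on UNIV"
      using summable_on_sum_list[of ys, OF summable] by (simp add: sum_list_mult_const)
    show "(\<lambda>a. \<bar>\<xi> a\<bar>) summable_on UNIV"
      using assms(2) unfolding l1_def by simp
    show "(\<Sum>y\<leftarrow>ys. \<bar>y a\<bar>) * \<bar>\<xi> a\<bar> \<le> \<bar>\<xi> a\<bar>" for a
    proof (rule mult_left_le_one_le)
      show "0 \<le> (\<Sum>y\<leftarrow>ys. \<bar>y a\<bar>)"
        by (rule sum_list_nonneg) auto
    qed (simp_all add: fbl_admissible_column_sum_le[OF assms(1)])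
  qed
  finally show ?thesis .
qed

lemma fbl_admissible_Nil: "fbl_admissible []"
  unfolding fbl_admissible_def by simp

lemma
  assumes "\<And>ys. fbl_admissible ys \<Longrightarrow> (\<Sum>y\<leftarrow>ys. \<bar>f y\<bar>) \<le> B"
  shows fbl_norm_le: "fbl_norm f \<le> B"
    and bdd_above_fbl_vals: "bdd_above (fbl_vals f)"
proof -
  have ub: "v \<le> B" if "v \<in> fbl_vals f" for v
    using that assms unfolding fbl_vals_def by blast
  have "fbl_vals f \<noteq> {}"
    using fbl_admissible_Nil unfolding fbl_vals_def by blast
  then show "fbl_norm f \<le> B"
    unfolding fbl_norm_def using ub by (rule cSup_least)
  show "bdd_above (fbl_vals f)"
    using ub by (rule bdd_aboveI)
qed

definition gfun :: "('a \<Rightarrow> real) \<Rightarrow> ('a \<Rightarrow> real) \<Rightarrow> real" where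
  "gfun \<phi> = (\<lambda>y. \<bar>pair (\<lambda>a. \<bar>y a\<bar>) \<phi>\<bar>)"

lemma fbl_admissible_sum_gfun_diff_le:
  assumes "fbl_admissible ys" "\<phi> \<in> l1" "\<psi> \<in> l1"
  shows "(\<Sum>y\<leftarrow>ys. \<bar>gfun \<phi> y - gfun \<psi> y\<bar>) \<le> l1_norm (\<lambda>a. \<phi> a - \<psi> a)"
proof -
  have "(\<Sum>y\<leftarrow>ys. \<bar>gfun \<phi> y - gfun \<psi> y\<bar>)
      \<le> (\<Sum>y\<leftarrow>ys. \<bar>pair (\<lambda>a. \<bar>y a\<bar>) (\<lambda>a. \<phi> a - \<psi> a)\<bar>)"
  proof (rule sum_list_mono)
    fix y assume "y \<in> set ys"
    then obtain M where "\<And>a. \<bar>\<bar>y a\<bar>\<bar> \<le> M"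
      using fbl_admissible_boundE[OF assms(1)] by (metis abs_abs)
    then show "\<bar>gfun \<phi> y - gfun \<psi> y\<bar> \<le> \<bar>pair (\<lambda>a. \<bar>y a\<bar>) (\<lambda>a. \<phi> a - \<psi> a)\<bar>"
      unfolding gfun_def using pair_diff[OF assms(2,3), of "\<lambda>a. \<bar>y a\<bar>" M, symmetric]
      by (simp add: abs_triangle_ineq3)
  qed
  also have "\<dots> \<le> l1_norm (\<lambda>a. \<phi> a - \<psi> a)"
    by (rule fbl_admissible_sum_abs_pair_le[OF assms(1) l1_diff[OF assms(2,3)]])
  finally show ?thesis .
qed

lemma fbl_norm_gfun_diff_le:
  assumes "\<phi> \<in> l1" "\<psi> \<in> l1"
  shows "fbl_norm (\<lambda>y. gfun \<phi> y - gfun \<psi> y) \<le> l1_norm (\<lambda>a. \<phi> a - \<psi> a)"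
  using fbl_admissible_sum_gfun_diff_le[OF _ assms] by (rule fbl_norm_le)

lemma bdd_above_fbl_vals_gfun:
  assumes "\<phi> \<in> l1"
  shows "bdd_above (fbl_vals (gfun \<phi>))"
proof (rule bdd_above_fbl_vals)
  have zero: "(\<lambda>a. 0) \<in> l1" "gfun (\<lambda>a. 0) y = 0" for y
    by (simp_all add: l1_def gfun_def pair_def)
  show "(\<Sum>y\<leftarrow>ys. \<bar>gfun \<phi> y\<bar>) \<le> l1_norm \<phi>" if "fbl_admissible ys" for ys
    using fbl_admissible_sum_gfun_diff_le[OF that assms zero(1)] by (simp add: zero(2))
qed

lemma pos_hom_gfun: "pos_hom (gfun \<phi>)"
  unfolding pos_hom_def
proof (intro ballI allI impI)
  fix y :: "'a \<Rightarrow> real" and c :: real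
  assume "c > 0"
  then have "pair (\<lambda>a. \<bar>c * y a\<bar>) \<phi> = c * pair (\<lambda>a. \<bar>y a\<bar>) \<phi>"
    unfolding pair_def by (simp add: abs_mult mult.assoc infsum_cmult_right')
  then show "gfun \<phi> (\<lambda>a. c * y a) = c * gfun \<phi> y"
    using \<open>c > 0\<close> by (simp add: gfun_def abs_mult)
qed

lemma gen_sublattice_abs:
  assumes "f \<in> gen_sublattice"
  shows "(\<lambda>y. \<bar>f y\<bar>) \<in> gen_sublattice"
proof -
  have "(\<lambda>y. max (f y) (- 1 * f y)) \<in> gen_sublattice"
    using assms by (intro gen_max gen_scale)
  moreover have "(\<lambda>y. max (f y) (- 1 * f y)) = (\<lambda>y. \<bar>f y\<bar>)"
    by (auto simp: fun_eq_iff max_def)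
  ultimately show ?thesis
    by simp
qed

lemma gen_sublattice_zero: "(\<lambda>y. 0) \<in> gen_sublattice"
proof -
  have "delta (\<lambda>a. 0) \<in> gen_sublattice"
    by (rule gen_delta) (simp add: l1_def)
  then show ?thesis
    by (simp add: delta_def pair_def)
qed

lemma gen_sublattice_sum:
  assumes "finite F" "\<And>i. i \<in> F \<Longrightarrow> h i \<in> gen_sublattice"
  shows "(\<lambda>y. \<Sum>i\<in>F. h i y) \<in> gen_sublattice"
  using assms
proof (induction F rule: finite_induct)
  case empty
  then show ?case using gen_sublattice_zero by simp
next
  case (insert i F)
  then have "(\<lambda>y. h i y + (\<Sum>j\<in>F. h j y)) \<in> gen_sublattice"
    using gen_add[of "h i" "\<lambda>y. \<Sum>j\<in>F. h j y"] by simp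
  then show ?case using insert by simp
qed

lemma gfun_finite_support_in_gen_sublattice:
  assumes "finite F"
  shows "gfun (\<lambda>a. if a \<in> F then \<phi> a else 0) \<in> gen_sublattice"
proof -
  have "(\<lambda>y. \<Sum>a\<in>F. \<phi> a * \<bar>delta (indicator {a}) y\<bar>) \<in> gen_sublattice"
    by (rule gen_sublattice_sum[OF assms])
      (intro gen_scale gen_sublattice_abs gen_delta indicator_singleton_in_l1)
  then have "(\<lambda>y. \<bar>\<Sum>a\<in>F. \<phi> a * \<bar>delta (indicator {a}) y\<bar>\<bar>) \<in> gen_sublattice"
    by (rule gen_sublattice_abs)
  moreover have "pair (\<lambda>a. \<bar>y a\<bar>) (\<lambda>a. if a \<in> F then \<phi> a else 0) = (\<Sum>a\<in>F. \<bar>y a\<bar> * \<phi> a)" for y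
    unfolding pair_def by (rule infsumI, rule has_sum_finite_neutralI[OF assms]) auto
  ultimately show ?thesis
    by (simp add: gfun_def delta_def pair_indicator_singleton mult.commute)
qed

lemma l1_truncation:
  assumes "\<phi> \<in> l1"
  shows "(\<lambda>a. if a \<in> F then \<phi> a else 0) \<in> l1"
  using assms unfolding l1_def mem_Collect_eq
  by (rule summable_on_comparison_test) auto

lemma l1_norm_tail_less:
  assumes "\<phi> \<in> l1" "\<epsilon> > 0"
  obtains F where "finite F" "l1_norm (\<lambda>a. \<phi> a - (if a \<in> F then \<phi> a else 0)) < \<epsilon>"
proof -
  have summable: "(\<lambda>a. \<bar>\<phi> a\<bar>) summable_on UNIV"
    using assms(1) unfolding l1_def by simp
  obtain F where "finite F" and F: "dist (\<Sum>a\<in>F. \<bar>\<phi> a\<bar>) (\<Sum>\<^sub>\<infinity>a. \<bar>\<phi> a\<bar>) \<le> \<epsilon> / 2"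
    using infsum_finite_approximation[OF summable, of "\<epsilon> / 2"] assms(2) by auto
  have "l1_norm (\<lambda>a. \<phi> a - (if a \<in> F then \<phi> a else 0)) = (\<Sum>\<^sub>\<infinity>a\<in>UNIV - F. \<bar>\<phi> a\<bar>)"
    unfolding l1_norm_def by (rule infsum_cong_neutral) auto
  also have "\<dots> = (\<Sum>\<^sub>\<infinity>a. \<bar>\<phi> a\<bar>) - (\<Sum>a\<in>F. \<bar>\<phi> a\<bar>)"
    using summable \<open>finite F\<close> by (simp add: infsum_Diff)
  also have "\<dots> < \<epsilon>"
    using F assms(2) unfolding dist_real_def by linarith
  finally show ?thesis
    using \<open>finite F\<close> that by blast
qed

theorem lemma4p8:
  fixes \<phi> :: "'a \<Rightarrow> real"
  assumes "\<phi> \<in> l1"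
  shows "(\<lambda>y. \<bar>pair (\<lambda>a. \<bar>y a\<bar>) \<phi>\<bar>) \<in> FBL"
proof -
  have "gfun \<phi> \<in> H0"
    unfolding H0_def using pos_hom_gfun bdd_above_fbl_vals_gfun[OF assms] by blast
  moreover have "\<exists>g\<in>gen_sublattice. fbl_norm (\<lambda>y. gfun \<phi> y - g y) < \<epsilon>" if "\<epsilon> > 0" for \<epsilon>
  proof -
    obtain F where "finite F" and tail: "l1_norm (\<lambda>a. \<phi> a - (if a \<in> F then \<phi> a else 0)) < \<epsilon>"
      using l1_norm_tail_less[OF assms \<open>\<epsilon> > 0\<close>] by blast
    let ?\<psi> = "\<lambda>a. if a \<in> F then \<phi> a else 0"
    have "fbl_norm (\<lambda>y. gfun \<phi> y - gfun ?\<psi> y) < \<epsilon>"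
      using fbl_norm_gfun_diff_le[OF assms l1_truncation[OF assms, of F]] tail by linarith
    then show ?thesis
      using gfun_finite_support_in_gen_sublattice[OF \<open>finite F\<close>] by blast
  qed
  ultimately show ?thesis
    unfolding FBL_def gfun_def by blast
qed

end
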